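(* Let $\mu,\nu\in P_2^r(\mathbb{R}^d)$ and let $r$ be the unique optimal transport map for the 2-Wasserstein distance with $r_\#\mu=\nu$. Let $N\subset\mathbb{R}^d$ be a $\mu$-negligible set such that $\langle r(x_1)-r(x_2),x_1-x_2\rangle>0$ for all distinct $x_1,x_2\in\mathbb{R}^d\setminus N$. For $t\in[0,1]$ let $h_t(x)=(1-t)x+tr(x)$ and $\mu_t=(h_t)_\#\mu$. If $r$ is continuous and $\operatorname{supp}(\mu)\setminus N$ contains a nonempty open set, then every geodesic measure $\mu_t$, $t\in[0,1]$, is a probabilistic frame.
   Context: $P_2^r(\mathbb{R}^d)$ denotes the set of probability measures on $\mathbb{R}^d$ with finite second moment that are absolutely continuous with respect to Lebesgue measure. The optimal transport map $r$ is the map with $r_\#\mu=\nu$ minimizing $\int\|x-r(x)\|^2d\mu(x)$; such an $r$ exists, is unique $\mu$-a.e., and a $\mu$-negligible set $N$ as described exists. A probabilistic frame is a probability measure on $\mathbb{R}^d$ with finite second moment whose support spans $\mathbb{R}^d$. $\operatorname{supp}(\mu)$ is the set of points all of whose open neighborhoods have positive $\mu$-measure. *)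

theory Defs
  imports "HOL-Probability.Probability"
begin

definition P2 :: "'a::euclidean_space measure \<Rightarrow> bool" where
  "P2 \<mu> \<longleftrightarrow> prob_space \<mu> \<and> sets \<mu> = sets borel \<and> integrable \<mu> (\<lambda>x. (norm x)\<^sup>2)"

definition P2r :: "'a::euclidean_space measure \<Rightarrow> bool" where
  "P2r \<mu> \<longleftrightarrow> P2 \<mu> \<and> absolutely_continuous lborel \<mu>"

definition transport_map :: "'a::euclidean_space measure \<Rightarrow> 'a measure \<Rightarrow> ('a \<Rightarrow> 'a) \<Rightarrow> bool" where
  "transport_map \<mu> \<nu> r \<longleftrightarrow> r \<in> borel_measurable \<mu> \<and> distr \<mu> borel r = \<nu>"

definition optimal_transport_map :: "'a::euclidean_space measure \<Rightarrow> 'a measure \<Rightarrow> ('a \<Rightarrow> 'a) \<Rightarrow> bool" where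
  "optimal_transport_map \<mu> \<nu> r \<longleftrightarrow> transport_map \<mu> \<nu> r \<and>
     (\<forall>s. transport_map \<mu> \<nu> s \<longrightarrow>
        (\<integral>\<^sup>+ x. ennreal ((norm (x - r x))\<^sup>2) \<partial>\<mu>) \<le> (\<integral>\<^sup>+ x. ennreal ((norm (x - s x))\<^sup>2) \<partial>\<mu>))"

definition msupp :: "'a::topological_space measure \<Rightarrow> 'a set" where
  "msupp \<mu> = {x. \<forall>U. open U \<and> x \<in> U \<longrightarrow> emeasure \<mu> U > 0}"

definition probabilistic_frame :: "'a::euclidean_space measure \<Rightarrow> bool" where
  "probabilistic_frame \<mu> \<longleftrightarrow> P2 \<mu> \<and> span (msupp \<mu>) = UNIV"

end

theory Submission
  imports Defs "HOL-Homology.Invariance_of_Domain"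
begin

text \<open>
  The displacement interpolation \<open>h\<^sub>t x = (1 - t) x + t r x\<close> is continuous, and strict
  monotonicity of \<open>r\<close> off \<open>N\<close> makes it injective on the open set \<open>U \<subseteq> supp \<mu> - N\<close>.
  By invariance of domain \<open>h\<^sub>t U\<close> is a nonempty open set; it lies in the support of
  \<open>\<mu>\<^sub>t = (h\<^sub>t)\<^sub>#\<mu>\<close> because \<open>h\<^sub>t\<close> is continuous, so the support spans the whole space.
  The second moment of \<open>\<mu>\<^sub>t\<close> is finite by convexity of \<open>\<parallel>\<cdot>\<parallel>\<^sup>2\<close>.
\<close>

lemma span_open_eq_UNIV:
  fixes S :: "'a::euclidean_space set"
  assumes "open S" "S \<noteq> {}"
  shows "span S = UNIV"
proof -
  have "dim S = dim (UNIV::'a set)"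
    using dim_openin[of UNIV S] assms by simp
  then show ?thesis using dim_eq_full by auto
qed

lemma norm_convex_comb_power2_le:
  fixes a b :: "'a::real_normed_vector"
  assumes "0 \<le> t" "t \<le> 1"
  shows "(norm ((1 - t) *\<^sub>R a + t *\<^sub>R b))\<^sup>2 \<le> (1 - t) * (norm a)\<^sup>2 + t * (norm b)\<^sup>2"
proof -
  have "norm ((1 - t) *\<^sub>R a + t *\<^sub>R b) \<le> (1 - t) * norm a + t * norm b"
    using norm_triangle_ineq[of "(1 - t) *\<^sub>R a" "t *\<^sub>R b"] assms by simp
  then have "(norm ((1 - t) *\<^sub>R a + t *\<^sub>R b))\<^sup>2 \<le> ((1 - t) * norm a + t * norm b)\<^sup>2"
    by (simp add: power_mono)
  also have "\<dots> = (1 - t) * (norm a)\<^sup>2 + t * (norm b)\<^sup>2 - t * (1 - t) * (norm a - norm b)\<^sup>2"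
    by (simp add: power2_eq_square algebra_simps)
  also have "\<dots> \<le> (1 - t) * (norm a)\<^sup>2 + t * (norm b)\<^sup>2"
    using assms by simp
  finally show ?thesis .
qed

lemma P2_distr:
  fixes \<mu> :: "'a::euclidean_space measure"
  assumes "P2 \<mu>" "f \<in> borel_measurable borel" "integrable \<mu> (\<lambda>x. (norm (f x))\<^sup>2)"
  shows "P2 (distr \<mu> borel f)"
proof -
  have sets: "sets \<mu> = sets borel" and "prob_space \<mu>"
    using assms(1) by (auto simp: P2_def)
  have f: "f \<in> borel_measurable \<mu>"
    using assms(2) measurable_cong_sets[OF sets refl] by auto
  show ?thesis
    unfolding P2_def
    using prob_space.prob_space_distr[OF \<open>prob_space \<mu>\<close> f] assms(3)
    by (simp add: integrable_distr_eq[OF f])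
qed

lemma transport_map_integrable_norm_power2:
  assumes "transport_map \<mu> \<nu> r" "P2 \<nu>"
  shows "integrable \<mu> (\<lambda>x. (norm (r x))\<^sup>2)"
proof -
  have r: "r \<in> borel_measurable \<mu>" and "distr \<mu> borel r = \<nu>"
    using assms(1) by (auto simp: transport_map_def)
  then have "integrable (distr \<mu> borel r) (\<lambda>x. (norm x)\<^sup>2)"
    using assms(2) by (simp add: P2_def)
  then show ?thesis
    by (simp add: integrable_distr_eq[OF r])
qed

lemma P2_distr_convex_comb:
  fixes \<mu> :: "'a::euclidean_space measure"
  assumes "P2 \<mu>" "r \<in> borel_measurable borel" "integrable \<mu> (\<lambda>x. (norm (r x))\<^sup>2)"
    and "0 \<le> t" "t \<le> 1"
  shows "P2 (distr \<mu> borel (\<lambda>x. (1 - t) *\<^sub>R x + t *\<^sub>R r x))"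
proof (rule P2_distr[OF assms(1)])
  show "(\<lambda>x. (1 - t) *\<^sub>R x + t *\<^sub>R r x) \<in> borel_measurable borel"
    using assms(2) by measurable
  have sets: "sets \<mu> = sets borel"
    using assms(1) by (simp add: P2_def)
  have "integrable \<mu> (\<lambda>x. (1 - t) * (norm x)\<^sup>2 + t * (norm (r x))\<^sup>2)"
    using assms(1,3) by (auto simp: P2_def)
  then show "integrable \<mu> (\<lambda>x. (norm ((1 - t) *\<^sub>R x + t *\<^sub>R r x))\<^sup>2)"
  proof (rule Bochner_Integration.integrable_bound)
    have "r \<in> borel_measurable \<mu>"
      using assms(2) measurable_cong_sets[OF sets refl] by auto
    then show "(\<lambda>x. (norm ((1 - t) *\<^sub>R x + t *\<^sub>R r x))\<^sup>2) \<in> borel_measurable \<mu>"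
      using sets by measurable
    show "AE x in \<mu>. norm ((norm ((1 - t) *\<^sub>R x + t *\<^sub>R r x))\<^sup>2)
                      \<le> norm ((1 - t) * (norm x)\<^sup>2 + t * (norm (r x))\<^sup>2)"
    proof (rule AE_I2)
      fix x
      have "(norm ((1 - t) *\<^sub>R x + t *\<^sub>R r x))\<^sup>2 \<le> (1 - t) * (norm x)\<^sup>2 + t * (norm (r x))\<^sup>2"
        by (rule norm_convex_comb_power2_le[OF assms(4,5)])
      then show "norm ((norm ((1 - t) *\<^sub>R x + t *\<^sub>R r x))\<^sup>2)
                   \<le> norm ((1 - t) * (norm x)\<^sup>2 + t * (norm (r x))\<^sup>2)"
        by (simp add: order_trans[OF _ abs_ge_self])
    qed
  qed
qed

lemma inj_on_convex_comb_strictly_monotone: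
  fixes r :: "'a::real_inner \<Rightarrow> 'a"
  assumes mono: "\<And>x1 x2. x1 \<in> S \<Longrightarrow> x2 \<in> S \<Longrightarrow> x1 \<noteq> x2 \<Longrightarrow> (r x1 - r x2) \<bullet> (x1 - x2) > 0"
    and "0 \<le> t" "t \<le> 1"
  shows "inj_on (\<lambda>x. (1 - t) *\<^sub>R x + t *\<^sub>R r x) S"
proof (rule inj_onI, rule ccontr)
  fix x1 x2
  assume x: "x1 \<in> S" "x2 \<in> S" and eq: "(1 - t) *\<^sub>R x1 + t *\<^sub>R r x1 = (1 - t) *\<^sub>R x2 + t *\<^sub>R r x2"
    and ne: "x1 \<noteq> x2"
  have "(1 - t) *\<^sub>R (x1 - x2) + t *\<^sub>R (r x1 - r x2) = 0"
    using eq by (simp add: algebra_simps)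
  then have "(1 - t) * ((x1 - x2) \<bullet> (x1 - x2)) + t * ((r x1 - r x2) \<bullet> (x1 - x2)) = 0"
    by (metis inner_add_left inner_scaleR_left inner_zero_left)
  moreover have "(x1 - x2) \<bullet> (x1 - x2) > 0"
    using ne by simp
  moreover have "(r x1 - r x2) \<bullet> (x1 - x2) > 0"
    using mono x ne by blast
  ultimately show False
    using assms(2,3) by (smt (verit) mult_nonneg_nonneg mult_pos_pos)
qed

lemma image_msupp_subset_msupp_distr:
  fixes \<mu> :: "'a::topological_space measure" and f :: "'a \<Rightarrow> 'b::topological_space"
  assumes sets: "sets \<mu> = sets borel" and f: "continuous_on UNIV f"
  shows "f ` msupp \<mu> \<subseteq> msupp (distr \<mu> borel f)"
proof (clarsimp simp: msupp_def)
  fix x V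
  assume x: "\<forall>U. open U \<and> x \<in> U \<longrightarrow> 0 < emeasure \<mu> U" and V: "open V" "f x \<in> V"
  have fm: "f \<in> borel_measurable \<mu>"
    using borel_measurable_continuous_onI[OF f] measurable_cong_sets[OF sets refl] by auto
  have "open (f -` V)"
    using V f by (simp add: continuous_on_open_vimage)
  then have "0 < emeasure \<mu> (f -` V)"
    using x V by auto
  moreover have "space \<mu> = UNIV"
    using sets_eq_imp_space_eq[OF sets] by simp
  ultimately show "0 < emeasure (distr \<mu> borel f) V"
    using V by (simp add: emeasure_distr[OF fm])
qed

theorem mainTheorem13:
  fixes \<mu> \<nu> :: "'a::euclidean_space measure" and r :: "'a \<Rightarrow> 'a" and N :: "'a set"
  assumes "P2r \<mu>" and "P2r \<nu>"
    and "optimal_transport_map \<mu> \<nu> r"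
    and "\<exists>A\<in>null_sets \<mu>. N \<subseteq> A"
    and "\<forall>x1 x2. x1 \<notin> N \<and> x2 \<notin> N \<and> x1 \<noteq> x2 \<longrightarrow> (r x1 - r x2) \<bullet> (x1 - x2) > 0"
    and "continuous_on UNIV r"
    and "\<exists>U. open U \<and> U \<noteq> {} \<and> U \<subseteq> msupp \<mu> - N"
  shows "\<forall>t\<in>{0..1::real}.
           probabilistic_frame (distr \<mu> borel (\<lambda>x. (1 - t) *\<^sub>R x + t *\<^sub>R r x))"
proof
  fix t :: real assume t: "t \<in> {0..1}"
  define h where "h = (\<lambda>x. (1 - t) *\<^sub>R x + t *\<^sub>R r x)"
  have P2: "P2 \<mu>" "P2 \<nu>"
    using assms(1,2) by (auto simp: P2r_def)
  have h_cont: "continuous_on UNIV h"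
    unfolding h_def by (intro continuous_intros assms(6))
  have "integrable \<mu> (\<lambda>x. (norm (r x))\<^sup>2)"
    using assms(3) P2(2) transport_map_integrable_norm_power2
    by (auto simp: optimal_transport_map_def)
  then have P2_h: "P2 (distr \<mu> borel h)"
    using P2_distr_convex_comb[OF P2(1) borel_measurable_continuous_onI[OF assms(6)]] t
    by (simp add: h_def)
  obtain U where U: "open U" "U \<noteq> {}" "U \<subseteq> msupp \<mu> - N"
    using assms(7) by blast
  have "inj_on h U"
    unfolding h_def using assms(5) U(3) t
    by (intro inj_on_convex_comb_strictly_monotone) auto
  then have "open (h ` U)"
    using invariance_of_domain[OF continuous_on_subset[OF h_cont] U(1)] by simp
  then have "span (h ` U) = UNIV"
    using U(2) by (simp add: span_open_eq_UNIV)
  moreover have "h ` U \<subseteq> msupp (distr \<mu> borel h)"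
    using image_msupp_subset_msupp_distr[OF _ h_cont, of \<mu>] P2(1) U(3) by (auto simp: P2_def)
  ultimately have "span (msupp (distr \<mu> borel h)) = UNIV"
    using span_mono by blast
  then show "probabilistic_frame (distr \<mu> borel (\<lambda>x. (1 - t) *\<^sub>R x + t *\<^sub>R r x))"
    using P2_h unfolding probabilistic_frame_def h_def by simp
qed

end
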